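(* Fix $n\in\mathbb N$. Let $\mathfrak M\models\mathrm{I}\Delta_0$ and $a\in M$. Then: (1) $a+1\in\Sigma_n\text{-}\mathrm{Card}^{\mathfrak M}(a)$ if and only if $\Sigma_n\text{-}\mathrm{Card}^{\mathfrak M}(a)$ is closed under $x\mapsto x+1$; (2) $2a\in\Sigma_n\text{-}\mathrm{Card}^{\mathfrak M}(a)$ if and only if $\Sigma_n\text{-}\mathrm{Card}^{\mathfrak M}(a)$ is closed under $x\mapsto2x$; (3) $a^2\in\Sigma_n\text{-}\mathrm{Card}^{\mathfrak M}(a)$ if and only if $\Sigma_n\text{-}\mathrm{Card}^{\mathfrak M}(a)$ is closed under $x\mapsto x^2$.
   Context: $\mathrm{I}\Delta_0$ is first-order arithmetic with induction for bounded formulas. Numbers $x$ are identified with $\{v:v<x\}$. For $\mathfrak M\models\mathrm{I}\Delta_0$ and $a\in M$, $\Sigma_n\text{-}\mathrm{Card}^{\mathfrak M}(a)=\{b\in M:$ in $\mathfrak M$ there is an injection from $b$ into $a$ whose graph is definable by a $\Sigma_n$ formula with parameters$\}$. *)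

theory Defs
  imports Main
begin

datatype trm = Var nat | Zero | Succ trm | Plus trm trm | Times trm trm

datatype fm = Eq trm trm | Lt trm trm | Neg fm | Conj fm fm | Ex nat fm

definition All :: "nat \<Rightarrow> fm \<Rightarrow> fm" where
  "All x \<phi> = Neg (Ex x (Neg \<phi>))"

fun tvars :: "trm \<Rightarrow> nat set" where
  "tvars (Var x) = {x}"
| "tvars Zero = {}"
| "tvars (Succ t) = tvars t"
| "tvars (Plus s t) = tvars s \<union> tvars t"
| "tvars (Times s t) = tvars s \<union> tvars t"

text \<open>An L_A-structure; the universe is the whole type 'a.\<close>
record 'a struc =
  zer :: 'a
  suc :: "'a \<Rightarrow> 'a"
  pls :: "'a \<Rightarrow> 'a \<Rightarrow> 'a"
  tms :: "'a \<Rightarrow> 'a \<Rightarrow> 'a"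
  lss :: "'a \<Rightarrow> 'a \<Rightarrow> bool"

fun teval :: "'a struc \<Rightarrow> (nat \<Rightarrow> 'a) \<Rightarrow> trm \<Rightarrow> 'a" where
  "teval M e (Var x) = e x"
| "teval M e Zero = zer M"
| "teval M e (Succ t) = suc M (teval M e t)"
| "teval M e (Plus s t) = pls M (teval M e s) (teval M e t)"
| "teval M e (Times s t) = tms M (teval M e s) (teval M e t)"

fun sat :: "'a struc \<Rightarrow> (nat \<Rightarrow> 'a) \<Rightarrow> fm \<Rightarrow> bool" where
  "sat M e (Eq s t) = (teval M e s = teval M e t)"
| "sat M e (Lt s t) = lss M (teval M e s) (teval M e t)"
| "sat M e (Neg \<phi>) = (\<not> sat M e \<phi>)"
| "sat M e (Conj \<phi> \<psi>) = (sat M e \<phi> \<and> sat M e \<psi>)"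
| "sat M e (Ex x \<phi>) = (\<exists>u. sat M (e(x := u)) \<phi>)"

inductive delta0 :: "fm \<Rightarrow> bool" where
  "delta0 (Eq s t)"
| "delta0 (Lt s t)"
| "delta0 \<phi> \<Longrightarrow> delta0 (Neg \<phi>)"
| "delta0 \<phi> \<Longrightarrow> delta0 \<psi> \<Longrightarrow> delta0 (Conj \<phi> \<psi>)"
| "x \<notin> tvars t \<Longrightarrow> delta0 \<phi> \<Longrightarrow> delta0 (Ex x (Conj (Lt (Var x) t) \<phi>))"

inductive sigma :: "nat \<Rightarrow> fm \<Rightarrow> bool" and pi :: "nat \<Rightarrow> fm \<Rightarrow> bool" where
  "delta0 \<phi> \<Longrightarrow> sigma n \<phi>"
| "delta0 \<phi> \<Longrightarrow> pi n \<phi>"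
| "pi n \<phi> \<Longrightarrow> sigma (Suc n) \<phi>"
| "sigma n \<phi> \<Longrightarrow> pi (Suc n) \<phi>"
| "sigma (Suc n) \<phi> \<Longrightarrow> sigma (Suc n) (Ex x \<phi>)"
| "pi (Suc n) \<phi> \<Longrightarrow> pi (Suc n) (All x \<phi>)"

definition IDelta0_model :: "'a struc \<Rightarrow> bool" where
  "IDelta0_model M \<longleftrightarrow>
     (\<forall>x. suc M x \<noteq> zer M) \<and>
     (\<forall>x y. suc M x = suc M y \<longrightarrow> x = y) \<and>
     (\<forall>x. pls M x (zer M) = x) \<and>
     (\<forall>x y. pls M x (suc M y) = suc M (pls M x y)) \<and>
     (\<forall>x. tms M x (zer M) = zer M) \<and>
     (\<forall>x y. tms M x (suc M y) = pls M (tms M x y) x) \<and>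
     (\<forall>x y. lss M x y \<longleftrightarrow> (\<exists>z. pls M x (suc M z) = y)) \<and>
     (\<forall>\<phi> v e. delta0 \<phi> \<longrightarrow>
        sat M (e(v := zer M)) \<phi> \<longrightarrow>
        (\<forall>u. sat M (e(v := u)) \<phi> \<longrightarrow> sat M (e(v := suc M u)) \<phi>) \<longrightarrow>
        (\<forall>u. sat M (e(v := u)) \<phi>))"

text \<open>b \<in> Sigma_n-Card(a): there is a Sigma_n formula (with parameters, given by the
  environment e) whose defined binary relation is the graph of an injection
  from b = {v. v < b} into a = {v. v < a}.\<close>
definition SigmaCard :: "nat \<Rightarrow> 'a struc \<Rightarrow> 'a \<Rightarrow> 'a set" where
  "SigmaCard n M a = {b. \<exists>\<phi> x y e. sigma n \<phi> \<and> x \<noteq> y \<and>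
      (let R = (\<lambda>u w. sat M (e(x := u, y := w)) \<phi>) in
         (\<forall>u w. R u w \<longrightarrow> lss M u b \<and> lss M w a) \<and>
         (\<forall>u. lss M u b \<longrightarrow> (\<exists>!w. R u w)) \<and>
         (\<forall>u u' w. R u w \<longrightarrow> R u' w \<longrightarrow> u = u'))}"

end

theory Submission
  imports Defs
begin

(* Sigma_n-Card(a) contains a (via the identity) and is closed under composition: the
   composite of Sigma_n-definable injections R1 : c -> b and R2 : b -> a is defined by
   (EX w < b. R1 u w & R2 w v), and Sigma_n formulas with parameters are closed under
   conjunction, disjunction and bounded existential quantification (rename bound variables
   apart, then pull the quantifier blocks to the front).

   Moreover Sigma_n-Card is compatible with + and *: injections R1 : b -> a and R2 : d -> c
   combine into b + d -> a + c (u |-> R1 u for u < b, b + u' |-> a + R2 u') and into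
   b * d -> a * c (b q + r |-> a R2(q) + R1(r), by division with remainder in I Delta_0).

   Hence for F(x) = x + 1, x + x, x * x: if F(a) is in Sigma_n-Card(a) and x is in
   Sigma_n-Card(a), then F(x) is in Sigma_n-Card(F(a)), which is contained in Sigma_n-Card(a);
   the converse is the case x = a. *)

fun vars :: "fm \<Rightarrow> nat set" where
  "vars (Eq s t) = tvars s \<union> tvars t"
| "vars (Lt s t) = tvars s \<union> tvars t"
| "vars (Neg \<phi>) = vars \<phi>"
| "vars (Conj \<phi> \<psi>) = vars \<phi> \<union> vars \<psi>"
| "vars (Ex x \<phi>) = insert x (vars \<phi>)"

fun bvars :: "fm \<Rightarrow> nat set" where
  "bvars (Eq s t) = {}"
| "bvars (Lt s t) = {}"
| "bvars (Neg \<phi>) = bvars \<phi>"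
| "bvars (Conj \<phi> \<psi>) = bvars \<phi> \<union> bvars \<psi>"
| "bvars (Ex x \<phi>) = insert x (bvars \<phi>)"

lemma finite_tvars: "finite (tvars t)"
  by (induction t) auto

lemma finite_vars: "finite (vars \<phi>)"
  by (induction \<phi>) (auto simp: finite_tvars)

lemma teval_cong: "(\<And>v. v \<in> tvars t \<Longrightarrow> e v = e' v) \<Longrightarrow> teval M e t = teval M e' t"
  by (induction t) auto

lemma sat_cong: "(\<And>v. v \<in> vars \<phi> \<Longrightarrow> e v = e' v) \<Longrightarrow> sat M e \<phi> = sat M e' \<phi>"
proof (induction \<phi> arbitrary: e e')
  case (Eq s t)
  have "teval M e s = teval M e' s" "teval M e t = teval M e' t"
    by (rule teval_cong; simp add: Eq.prems)+
  then show ?case by simp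
next
  case (Lt s t)
  have "teval M e s = teval M e' s" "teval M e t = teval M e' t"
    by (rule teval_cong; simp add: Lt.prems)+
  then show ?case by simp
next
  case (Neg \<phi>)
  have "sat M e \<phi> = sat M e' \<phi>"
    by (rule Neg.IH; simp add: Neg.prems)
  then show ?case by simp
next
  case (Conj \<phi> \<psi>)
  have "sat M e \<phi> = sat M e' \<phi>" "sat M e \<psi> = sat M e' \<psi>"
    by (rule Conj.IH; simp add: Conj.prems)+
  then show ?case by simp
next
  case (Ex x \<phi>)
  have "sat M (e(x := u)) \<phi> = sat M (e'(x := u)) \<phi>" for u
    using Ex.prems by (intro Ex.IH) auto
  then show ?case by simp
qed

lemma vars_All [simp]: "vars (All x \<phi>) = insert x (vars \<phi>)"
  and bvars_All [simp]: "bvars (All x \<phi>) = insert x (bvars \<phi>)"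
  and sat_All [simp]: "sat M e (All x \<phi>) = (\<forall>u. sat M (e(x := u)) \<phi>)"
  by (simp_all add: All_def)

definition Disj :: "fm \<Rightarrow> fm \<Rightarrow> fm" where
  "Disj \<phi> \<psi> = Neg (Conj (Neg \<phi>) (Neg \<psi>))"

lemma sat_Disj [simp]: "sat M e (Disj \<phi> \<psi>) = (sat M e \<phi> \<or> sat M e \<psi>)"
  by (simp add: Disj_def)

lemma delta0_Disj: "delta0 \<phi> \<Longrightarrow> delta0 \<psi> \<Longrightarrow> delta0 (Disj \<phi> \<psi>)"
  unfolding Disj_def by (intro delta0.intros)

fun exs :: "nat list \<Rightarrow> fm \<Rightarrow> fm" where
  "exs [] \<phi> = \<phi>"
| "exs (x # xs) \<phi> = Ex x (exs xs \<phi>)"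

fun alls :: "nat list \<Rightarrow> fm \<Rightarrow> fm" where
  "alls [] \<phi> = \<phi>"
| "alls (x # xs) \<phi> = All x (alls xs \<phi>)"

lemma vars_exs [simp]: "vars (exs xs \<phi>) = set xs \<union> vars \<phi>"
  and bvars_exs [simp]: "bvars (exs xs \<phi>) = set xs \<union> bvars \<phi>"
  and vars_alls [simp]: "vars (alls xs \<phi>) = set xs \<union> vars \<phi>"
  and bvars_alls [simp]: "bvars (alls xs \<phi>) = set xs \<union> bvars \<phi>"
  by (induction xs) auto

lemma sat_exs:
  "sat M e (exs xs \<phi>) \<longleftrightarrow> (\<exists>e'. (\<forall>v. v \<notin> set xs \<longrightarrow> e' v = e v) \<and> sat M e' \<phi>)"
proof (induction xs arbitrary: e)
  case Nil
  then show ?case by (auto intro: ext)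
next
  case (Cons x xs)
  show ?case
  proof
    assume "sat M e (exs (x # xs) \<phi>)"
    then obtain u e' where "\<forall>v. v \<notin> set xs \<longrightarrow> e' v = (e(x := u)) v" "sat M e' \<phi>"
      using Cons by auto
    then show "\<exists>e'. (\<forall>v. v \<notin> set (x # xs) \<longrightarrow> e' v = e v) \<and> sat M e' \<phi>"
      by (intro exI[of _ e']) auto
  next
    assume "\<exists>e'. (\<forall>v. v \<notin> set (x # xs) \<longrightarrow> e' v = e v) \<and> sat M e' \<phi>"
    then obtain e' where "\<forall>v. v \<notin> set (x # xs) \<longrightarrow> e' v = e v" "sat M e' \<phi>"
      by blast
    then have "sat M (e(x := e' x)) (exs xs \<phi>)"
      using Cons by auto
    then show "sat M e (exs (x # xs) \<phi>)"
      by auto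
  qed
qed

lemma sat_alls_iff_not_exs: "sat M e (alls xs \<phi>) \<longleftrightarrow> \<not> sat M e (exs xs (Neg \<phi>))"
  by (induction xs arbitrary: e) auto

section \<open>Prenex operations on the arithmetic hierarchy\<close>

lemma sigma_pi_normal_form:
  shows "sigma n \<phi> \<Longrightarrow> (n = 0 \<longrightarrow> delta0 \<phi>) \<and> (\<forall>m. n = Suc m \<longrightarrow> (\<exists>xs \<theta>. \<phi> = exs xs \<theta> \<and> pi m \<theta>))"
    and "pi n \<phi> \<Longrightarrow> (n = 0 \<longrightarrow> delta0 \<phi>) \<and> (\<forall>m. n = Suc m \<longrightarrow> (\<exists>xs \<theta>. \<phi> = alls xs \<theta> \<and> sigma m \<theta>))"
proof (induction rule: sigma_pi.inducts)
  case (5 n \<phi> x)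
  then show ?case by (metis exs.simps(2) nat.distinct(1))
next
  case (6 n \<phi> x)
  then show ?case by (metis alls.simps(2) nat.distinct(1))
qed (metis exs.simps(1) alls.simps(1) sigma_pi.intros(1,2) nat.distinct(1) nat.inject)+

lemma sigma_0_delta0: "sigma 0 \<phi> \<Longrightarrow> delta0 \<phi>"
  and pi_0_delta0: "pi 0 \<phi> \<Longrightarrow> delta0 \<phi>"
  using sigma_pi_normal_form by blast+

lemma sigma_Suc_exs: "sigma (Suc m) \<phi> \<Longrightarrow> \<exists>xs \<theta>. \<phi> = exs xs \<theta> \<and> pi m \<theta>"
  and pi_Suc_alls: "pi (Suc m) \<phi> \<Longrightarrow> \<exists>xs \<theta>. \<phi> = alls xs \<theta> \<and> sigma m \<theta>"
  using sigma_pi_normal_form by blast+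

lemma sigma_Suc_exsI: "pi m \<theta> \<Longrightarrow> sigma (Suc m) (exs xs \<theta>)"
  and pi_Suc_allsI: "sigma m \<theta> \<Longrightarrow> pi (Suc m) (alls xs \<theta>)"
  by (induction xs) (auto intro: sigma_pi.intros)

lemma sat_exs_append_conj:
  assumes "set ys \<inter> vars \<theta> = {}" and "set xs \<inter> vars \<theta>' = {}"
    and "\<And>e. sat M e \<chi> \<longleftrightarrow> sat M e \<theta> \<and> sat M e \<theta>'"
  shows "sat M e (exs (xs @ ys) \<chi>) \<longleftrightarrow> sat M e (exs xs \<theta>) \<and> sat M e (exs ys \<theta>')"
proof
  assume "sat M e (exs (xs @ ys) \<chi>)"
  then obtain e' where e': "\<forall>v. v \<notin> set (xs @ ys) \<longrightarrow> e' v = e v" "sat M e' \<theta>" "sat M e' \<theta>'"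
    unfolding sat_exs assms(3) by blast
  define e1 where "e1 = (\<lambda>v. if v \<in> set xs then e' v else e v)"
  define e2 where "e2 = (\<lambda>v. if v \<in> set ys then e' v else e v)"
  have "sat M e1 \<theta> = sat M e' \<theta>" "sat M e2 \<theta>' = sat M e' \<theta>'"
    using e'(1) assms(1,2) by (intro sat_cong; simp add: e1_def e2_def; metis disjoint_iff)+
  moreover have "\<forall>v. v \<notin> set xs \<longrightarrow> e1 v = e v" "\<forall>v. v \<notin> set ys \<longrightarrow> e2 v = e v"
    by (auto simp: e1_def e2_def)
  ultimately show "sat M e (exs xs \<theta>) \<and> sat M e (exs ys \<theta>')"
    unfolding sat_exs using e'(2,3) by blast
next
  assume "sat M e (exs xs \<theta>) \<and> sat M e (exs ys \<theta>')"
  then obtain e1 e2 where e1: "\<forall>v. v \<notin> set xs \<longrightarrow> e1 v = e v" "sat M e1 \<theta>"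
    and e2: "\<forall>v. v \<notin> set ys \<longrightarrow> e2 v = e v" "sat M e2 \<theta>'"
    unfolding sat_exs by blast
  define e' where "e' = (\<lambda>v. if v \<in> set xs then e1 v else e2 v)"
  have "sat M e' \<theta> = sat M e1 \<theta>" "sat M e' \<theta>' = sat M e2 \<theta>'"
    using e1(1) e2(1) assms(1,2) by (intro sat_cong; simp add: e'_def; metis disjoint_iff)+
  moreover have "\<forall>v. v \<notin> set (xs @ ys) \<longrightarrow> e' v = e v"
    using e1 e2 by (auto simp: e'_def)
  ultimately show "sat M e (exs (xs @ ys) \<chi>)"
    unfolding sat_exs assms(3) using e1(2) e2(2) by blast
qed

lemma sat_exs_vacuous:
  assumes "set ys \<inter> vars \<theta> = {}"
  shows "sat M e (exs (xs @ ys) \<theta>) \<longleftrightarrow> sat M e (exs xs \<theta>)"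
proof
  assume "sat M e (exs (xs @ ys) \<theta>)"
  then obtain e' where e': "\<forall>v. v \<notin> set (xs @ ys) \<longrightarrow> e' v = e v" "sat M e' \<theta>"
    unfolding sat_exs by blast
  define e1 where "e1 = (\<lambda>v. if v \<in> set xs then e' v else e v)"
  have "sat M e1 \<theta> = sat M e' \<theta>"
    using e'(1) assms by (intro sat_cong; simp add: e1_def; metis disjoint_iff)
  then have "sat M e1 \<theta>"
    using e'(2) by simp
  then show "sat M e (exs xs \<theta>)"
    unfolding sat_exs by (intro exI[of _ e1]) (simp add: e1_def)
qed (auto simp: sat_exs)

lemma sat_exs_append_disj:
  assumes "set ys \<inter> vars \<theta> = {}" and "set xs \<inter> vars \<theta>' = {}"
    and "\<And>e. sat M e \<chi> \<longleftrightarrow> sat M e \<theta> \<or> sat M e \<theta>'"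
  shows "sat M e (exs (xs @ ys) \<chi>) \<longleftrightarrow> sat M e (exs xs \<theta>) \<or> sat M e (exs ys \<theta>')"
proof -
  have "sat M e (exs (xs @ ys) \<chi>) \<longleftrightarrow> sat M e (exs (xs @ ys) \<theta>) \<or> sat M e (exs (ys @ xs) \<theta>')"
    unfolding sat_exs assms(3) by auto
  then show ?thesis
    using sat_exs_vacuous assms(1,2) by metis
qed

lemma sat_alls_append_conj:
  assumes "set ys \<inter> vars \<theta> = {}" and "set xs \<inter> vars \<theta>' = {}"
    and "\<And>e. sat M e \<chi> \<longleftrightarrow> sat M e \<theta> \<and> sat M e \<theta>'"
  shows "sat M e (alls (xs @ ys) \<chi>) \<longleftrightarrow> sat M e (alls xs \<theta>) \<and> sat M e (alls ys \<theta>')"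
  using sat_exs_append_disj[of ys "Neg \<theta>" xs "Neg \<theta>'" M "Neg \<chi>"] assms
  by (simp add: sat_alls_iff_not_exs)

lemma sat_alls_append_disj:
  assumes "set ys \<inter> vars \<theta> = {}" and "set xs \<inter> vars \<theta>' = {}"
    and "\<And>e. sat M e \<chi> \<longleftrightarrow> sat M e \<theta> \<or> sat M e \<theta>'"
  shows "sat M e (alls (xs @ ys) \<chi>) \<longleftrightarrow> sat M e (alls xs \<theta>) \<or> sat M e (alls ys \<theta>')"
  using sat_exs_append_conj[of ys "Neg \<theta>" xs "Neg \<theta>'" M "Neg \<chi>"] assms
  by (simp add: sat_alls_iff_not_exs)

lemma sat_exs_append_connective:
  assumes "op = (\<and>) \<or> op = (\<or>)"
    and "set ys \<inter> vars \<theta> = {}" and "set xs \<inter> vars \<theta>' = {}"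
    and "\<And>e. sat M e \<chi> \<longleftrightarrow> op (sat M e \<theta>) (sat M e \<theta>')"
  shows "sat M e (exs (xs @ ys) \<chi>) \<longleftrightarrow> op (sat M e (exs xs \<theta>)) (sat M e (exs ys \<theta>'))"
  using assms(1)
proof
  assume "op = (\<and>)"
  with assms(2-4) show ?thesis by (simp add: sat_exs_append_conj)
next
  assume "op = (\<or>)"
  with assms(2-4) show ?thesis by (simp add: sat_exs_append_disj)
qed

lemma sat_alls_append_connective:
  assumes "op = (\<and>) \<or> op = (\<or>)"
    and "set ys \<inter> vars \<theta> = {}" and "set xs \<inter> vars \<theta>' = {}"
    and "\<And>e. sat M e \<chi> \<longleftrightarrow> op (sat M e \<theta>) (sat M e \<theta>')"
  shows "sat M e (alls (xs @ ys) \<chi>) \<longleftrightarrow> op (sat M e (alls xs \<theta>)) (sat M e (alls ys \<theta>'))"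
  using assms(1)
proof
  assume "op = (\<and>)"
  with assms(2-4) show ?thesis by (simp add: sat_alls_append_conj)
next
  assume "op = (\<or>)"
  with assms(2-4) show ?thesis by (simp add: sat_alls_append_disj)
qed

definition apart :: "fm \<Rightarrow> fm \<Rightarrow> bool" where
  "apart \<phi> \<psi> \<longleftrightarrow> bvars \<phi> \<inter> vars \<psi> = {} \<and> bvars \<psi> \<inter> vars \<phi> = {}"

lemma apart_exs:
  "apart (exs xs \<theta>) (exs ys \<theta>') \<Longrightarrow> apart \<theta> \<theta>' \<and> set ys \<inter> vars \<theta> = {} \<and> set xs \<inter> vars \<theta>' = {}"
  and apart_alls:
  "apart (alls xs \<theta>) (alls ys \<theta>') \<Longrightarrow> apart \<theta> \<theta>' \<and> set ys \<inter> vars \<theta> = {} \<and> set xs \<inter> vars \<theta>' = {}"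
  by (auto simp: apart_def)

definition connective_closed :: "'a struc \<Rightarrow> (bool \<Rightarrow> bool \<Rightarrow> bool) \<Rightarrow> (fm \<Rightarrow> bool) \<Rightarrow> bool" where
  "connective_closed M op C \<longleftrightarrow> (\<forall>\<phi> \<psi>. apart \<phi> \<psi> \<longrightarrow> C \<phi> \<longrightarrow> C \<psi> \<longrightarrow>
     (\<exists>\<chi>. C \<chi> \<and> (\<forall>e. sat M e \<chi> \<longleftrightarrow> op (sat M e \<phi>) (sat M e \<psi>))))"

lemma connective_closed_delta0:
  assumes "op = (\<and>) \<or> op = (\<or>)"
  shows "connective_closed M op delta0"
  unfolding connective_closed_def
proof (intro allI impI)
  fix \<phi> \<psi> assume "delta0 \<phi>" "delta0 \<psi>"
  then have "delta0 (Conj \<phi> \<psi>)" "delta0 (Disj \<phi> \<psi>)"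
    by (auto intro: delta0.intros delta0_Disj)
  with assms show "\<exists>\<chi>. delta0 \<chi> \<and> (\<forall>e. sat M e \<chi> \<longleftrightarrow> op (sat M e \<phi>) (sat M e \<psi>))"
    by (metis sat.simps(4) sat_Disj)
qed

lemma connective_closed_block:
  assumes closed: "connective_closed M op C"
    and normal_form: "\<And>\<phi>. C' \<phi> \<Longrightarrow> \<exists>xs \<theta>. \<phi> = B xs \<theta> \<and> C \<theta>"
    and block: "\<And>xs \<theta>. C \<theta> \<Longrightarrow> C' (B xs \<theta>)"
    and apart_block: "\<And>xs ys \<theta> \<theta>'. apart (B xs \<theta>) (B ys \<theta>') \<Longrightarrow>
          apart \<theta> \<theta>' \<and> set ys \<inter> vars \<theta> = {} \<and> set xs \<inter> vars \<theta>' = {}"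
    and sat_block: "\<And>xs ys \<theta> \<theta>' \<chi> e. set ys \<inter> vars \<theta> = {} \<Longrightarrow> set xs \<inter> vars \<theta>' = {} \<Longrightarrow>
          (\<And>e. sat M e \<chi> \<longleftrightarrow> op (sat M e \<theta>) (sat M e \<theta>')) \<Longrightarrow>
          sat M e (B (xs @ ys) \<chi>) \<longleftrightarrow> op (sat M e (B xs \<theta>)) (sat M e (B ys \<theta>'))"
  shows "connective_closed M op C'"
  unfolding connective_closed_def
proof (intro allI impI)
  fix \<phi> \<psi> assume "apart \<phi> \<psi>" "C' \<phi>" "C' \<psi>"
  then obtain xs ys \<theta> \<theta>' where \<phi>: "\<phi> = B xs \<theta>" "C \<theta>" and \<psi>: "\<psi> = B ys \<theta>'" "C \<theta>'"
    using normal_form by meson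
  with \<open>apart \<phi> \<psi>\<close> have "apart \<theta> \<theta>'" and ys: "set ys \<inter> vars \<theta> = {}" and xs: "set xs \<inter> vars \<theta>' = {}"
    using apart_block by blast+
  then obtain \<chi> where "C \<chi>" and \<chi>: "\<forall>e. sat M e \<chi> \<longleftrightarrow> op (sat M e \<theta>) (sat M e \<theta>')"
    using closed \<phi>(2) \<psi>(2) unfolding connective_closed_def by blast
  have "C' (B (xs @ ys) \<chi>)"
    using block \<open>C \<chi>\<close> .
  moreover have "\<forall>e. sat M e (B (xs @ ys) \<chi>) \<longleftrightarrow> op (sat M e \<phi>) (sat M e \<psi>)"
    using sat_block[OF ys xs] \<chi> \<phi>(1) \<psi>(1) by blast
  ultimately show "\<exists>\<chi>. C' \<chi> \<and> (\<forall>e. sat M e \<chi> \<longleftrightarrow> op (sat M e \<phi>) (sat M e \<psi>))"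
    by blast
qed

lemma connective_closed_sigma_pi:
  assumes "op = (\<and>) \<or> op = (\<or>)"
  shows "connective_closed M op (sigma n) \<and> connective_closed M op (pi n)"
proof (induction n)
  case 0
  have "sigma 0 = delta0" "pi 0 = delta0"
    using sigma_0_delta0 pi_0_delta0 sigma_pi.intros(1,2) by blast+
  then show ?case
    using connective_closed_delta0[OF assms] by simp
next
  case (Suc m)
  have "connective_closed M op (sigma (Suc m))"
    by (rule connective_closed_block[of M op "pi m" "sigma (Suc m)" exs,
          OF conjunct2[OF Suc.IH] sigma_Suc_exs sigma_Suc_exsI apart_exs
          sat_exs_append_connective[OF assms]])
  moreover have "connective_closed M op (pi (Suc m))"
    by (rule connective_closed_block[of M op "sigma m" "pi (Suc m)" alls,
          OF conjunct1[OF Suc.IH] pi_Suc_alls pi_Suc_allsI apart_alls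
          sat_alls_append_connective[OF assms]])
  ultimately show ?case ..
qed

fun rename_trm :: "(nat \<Rightarrow> nat) \<Rightarrow> (nat \<Rightarrow> nat) \<Rightarrow> nat set \<Rightarrow> trm \<Rightarrow> trm" where
  "rename_trm f g B (Var x) = Var (if x \<in> B then g x else f x)"
| "rename_trm f g B Zero = Zero"
| "rename_trm f g B (Succ t) = Succ (rename_trm f g B t)"
| "rename_trm f g B (Plus s t) = Plus (rename_trm f g B s) (rename_trm f g B t)"
| "rename_trm f g B (Times s t) = Times (rename_trm f g B s) (rename_trm f g B t)"

fun rename :: "(nat \<Rightarrow> nat) \<Rightarrow> (nat \<Rightarrow> nat) \<Rightarrow> nat set \<Rightarrow> fm \<Rightarrow> fm" where
  "rename f g B (Eq s t) = Eq (rename_trm f g B s) (rename_trm f g B t)"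
| "rename f g B (Lt s t) = Lt (rename_trm f g B s) (rename_trm f g B t)"
| "rename f g B (Neg \<phi>) = Neg (rename f g B \<phi>)"
| "rename f g B (Conj \<phi> \<psi>) = Conj (rename f g B \<phi>) (rename f g B \<psi>)"
| "rename f g B (Ex x \<phi>) = Ex (g x) (rename f g (insert x B) \<phi>)"

lemma teval_rename:
  "teval M e (rename_trm f g B t) = teval M (\<lambda>x. if x \<in> B then e (g x) else e (f x)) t"
  by (induction t) auto

lemma sat_rename:
  assumes "inj g" and "\<And>a b. f a \<noteq> g b"
  shows "sat M e (rename f g B \<phi>) = sat M (\<lambda>x. if x \<in> B then e (g x) else e (f x)) \<phi>"
proof (induction \<phi> arbitrary: e B)
  case (Ex x \<phi>)
  have "(\<lambda>z. if z \<in> insert x B then (e(g x := u)) (g z) else (e(g x := u)) (f z))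
        = (\<lambda>z. if z \<in> B then e (g z) else e (f z))(x := u)" for u
    using assms by (auto simp: inj_eq fun_eq_iff)
  then show ?case
    using Ex by simp
qed (simp_all add: teval_rename)

lemma tvars_rename_trm: "tvars (rename_trm f g B t) = (\<lambda>x. if x \<in> B then g x else f x) ` tvars t"
  by (induction t) auto

lemma vars_rename: "vars (rename f g B \<phi>) \<subseteq> range f \<union> range g"
  by (induction \<phi> arbitrary: B) (auto simp: tvars_rename_trm)

lemma bvars_rename: "bvars (rename f g B \<phi>) \<subseteq> range g"
  by (induction \<phi> arbitrary: B) auto

lemma delta0_rename:
  assumes "inj g" and "\<And>a b. f a \<noteq> g b"
  shows "delta0 \<phi> \<Longrightarrow> delta0 (rename f g B \<phi>)"
proof (induction \<phi> arbitrary: B rule: delta0.induct)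
  case (5 x t \<phi>)
  have "g x \<notin> tvars (rename_trm f g (insert x B) t)"
    using 5(1) assms(1) assms(2)[THEN not_sym] by (auto simp: tvars_rename_trm inj_eq)
  then show ?case
    using 5 by (auto intro: delta0.intros)
qed (auto intro: delta0.intros)

lemma sigma_rename:
  assumes "inj g" and "\<And>a b. f a \<noteq> g b"
  shows "sigma n \<phi> \<Longrightarrow> sigma n (rename f g B \<phi>)"
    and "pi n \<psi> \<Longrightarrow> pi n (rename f g B' \<psi>)"
proof (induction arbitrary: B and B' rule: sigma_pi.inducts)
  case (6 n \<phi> x)
  then show ?case
    by (simp add: All_def sigma_pi.intros(6)[unfolded All_def])
qed (auto intro: sigma_pi.intros delta0_rename[OF assms])

section \<open>Predicates definable by \<open>\<Sigma>\<^sub>n\<close> formulas with parameters\<close>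

text \<open>Predicates on slot assignments \<open>E\<close>: in the defining formula the even variable
  \<open>2 * i\<close> stands for slot \<open>E i\<close>, and the odd variables are parameters.\<close>

definition env_join :: "(nat \<Rightarrow> 'a) \<Rightarrow> (nat \<Rightarrow> 'a) \<Rightarrow> nat \<Rightarrow> 'a" where
  "env_join E p k = (if even k then E (k div 2) else p k)"

definition sigma_definable :: "nat \<Rightarrow> 'a struc \<Rightarrow> ((nat \<Rightarrow> 'a) \<Rightarrow> bool) \<Rightarrow> bool" where
  "sigma_definable n M P \<longleftrightarrow> (\<exists>\<phi> p. sigma n \<phi> \<and> (\<forall>E. P E \<longleftrightarrow> sat M (env_join E p) \<phi>))"

lemma sigma_definableI:
  "sigma n \<phi> \<Longrightarrow> (\<And>E. P E \<longleftrightarrow> sat M (env_join E p) \<phi>) \<Longrightarrow> sigma_definable n M P"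
  unfolding sigma_definable_def by blast

lemma sigma_definable_delta0:
  "delta0 \<phi> \<Longrightarrow> (\<And>E. P E \<longleftrightarrow> sat M (env_join E p) \<phi>) \<Longrightarrow> sigma_definable n M P"
  by (rule sigma_definableI) (auto intro: sigma_pi.intros)

lemma sigma_definable_sat:
  assumes "sigma n \<phi>"
  shows "sigma_definable n M (\<lambda>E. sat M (\<lambda>k. if k \<in> S then E (s k) else e k) \<phi>)"
proof -
  define f where "f k = (if k \<in> S then 2 * s k else 4 * k + 1)" for k
  define g where "g k = 4 * k + 3" for k :: nat
  define p where "p m = e (m div 4)" for m
  have "inj g"
    by (simp add: inj_def g_def)
  moreover have "f a \<noteq> g b" for a b
    unfolding f_def g_def by (cases "a \<in> S") (simp_all, presburger+)
  moreover have "Suc (4 * k) div 4 = k" for k :: nat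
    by presburger
  then have "(\<lambda>k. env_join E p (f k)) = (\<lambda>k. if k \<in> S then E (s k) else e k)" for E
    by (auto simp: fun_eq_iff env_join_def f_def p_def)
  ultimately show ?thesis
    using sigma_rename(1)[of g f, OF _ _ assms]
    by (intro sigma_definableI[where \<phi> = "rename f g {} \<phi>" and p = p]) (simp_all add: sat_rename)
qed

lemma sigma_definable_reindex:
  assumes "sigma_definable n M P"
  shows "sigma_definable n M (\<lambda>E. P (E \<circ> h))"
proof -
  obtain \<phi> p where "sigma n \<phi>" and P: "\<And>E. P E \<longleftrightarrow> sat M (env_join E p) \<phi>"
    using assms unfolding sigma_definable_def by blast
  have "env_join (E \<circ> h) p = (\<lambda>k. if k \<in> Collect even then E (h (k div 2)) else p k)" for E
    by (auto simp: env_join_def)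
  then show ?thesis
    using sigma_definable_sat[OF \<open>sigma n \<phi>\<close>, of M "Collect even" "\<lambda>k. h (k div 2)" p] P by simp
qed

text \<open>Renaming two formulas apart: slots stay fixed, while the parameters and the bound
  variables of the \<open>r\<close>-th formula (\<open>r < 2\<close>) move to the residues \<open>2 * r + 1\<close> and
  \<open>2 * r + 5\<close> modulo 8.\<close>

definition param_shift :: "nat \<Rightarrow> nat \<Rightarrow> nat" where
  "param_shift r k = (if even k then k else 8 * k + 2 * r + 1)"

definition bound_shift :: "nat \<Rightarrow> nat \<Rightarrow> nat" where
  "bound_shift r k = 8 * k + 2 * r + 5"

lemma shifts_distinct:
  assumes "r < 2" and "r' < 2"
  shows "param_shift r a \<noteq> bound_shift r' b"
    and "r \<noteq> r' \<Longrightarrow> bound_shift r a \<noteq> bound_shift r' b"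
  using assms unfolding param_shift_def bound_shift_def by (cases "even a"; presburger)+

lemma inj_bound_shift: "inj (bound_shift r)"
  by (simp add: inj_def bound_shift_def)

lemma sat_rename_shift:
  assumes "r < 2"
  shows "sat M (env_join E p) (rename (param_shift r) (bound_shift r) {} \<phi>)
     \<longleftrightarrow> sat M (env_join E (p \<circ> param_shift r)) \<phi>"
proof -
  have "(\<lambda>k. env_join E p (param_shift r k)) = env_join E (p \<circ> param_shift r)"
    by (auto simp: fun_eq_iff env_join_def param_shift_def)
  then show ?thesis
    using shifts_distinct(1)[OF assms assms] by (simp add: sat_rename inj_bound_shift)
qed

lemma sigma_rename_shift:
  "r < 2 \<Longrightarrow> sigma n \<phi> \<Longrightarrow> sigma n (rename (param_shift r) (bound_shift r) {} \<phi>)"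
  by (rule sigma_rename(1)) (simp_all add: inj_bound_shift shifts_distinct)

lemma apart_rename_shift:
  "apart (rename (param_shift 0) (bound_shift 0) {} \<phi>) (rename (param_shift 1) (bound_shift 1) {} \<psi>)"
    (is "apart ?\<phi> ?\<psi>")
proof -
  have distinct: "bound_shift 0 a \<noteq> param_shift 1 b" "bound_shift 0 a \<noteq> bound_shift 1 b"
    "bound_shift 1 a \<noteq> param_shift 0 b" "bound_shift 1 a \<noteq> bound_shift 0 b" for a b
    using shifts_distinct(1)[of 1 0 b a] shifts_distinct(2)[of 0 1 a b]
      shifts_distinct(1)[of 0 1 b a] shifts_distinct(2)[of 1 0 a b] by auto
  have "bvars ?\<phi> \<subseteq> range (bound_shift 0)" "vars ?\<psi> \<subseteq> range (param_shift 1) \<union> range (bound_shift 1)"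
    and "bvars ?\<psi> \<subseteq> range (bound_shift 1)" "vars ?\<phi> \<subseteq> range (param_shift 0) \<union> range (bound_shift 0)"
    by (rule bvars_rename vars_rename)+
  moreover have "range (bound_shift 0) \<inter> (range (param_shift 1) \<union> range (bound_shift 1)) = {}"
    and "range (bound_shift 1) \<inter> (range (param_shift 0) \<union> range (bound_shift 0)) = {}"
    using distinct by auto
  ultimately show ?thesis
    unfolding apart_def by (meson disjoint_iff subsetD)
qed

lemma sigma_definable_connective:
  assumes "op = (\<and>) \<or> op = (\<or>)"
    and "sigma_definable n M P" and "sigma_definable n M Q"
  shows "sigma_definable n M (\<lambda>E. op (P E) (Q E))"
proof -
  obtain \<phi>1 p1 where "sigma n \<phi>1" and P: "\<And>E. P E \<longleftrightarrow> sat M (env_join E p1) \<phi>1"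
    using assms(2) unfolding sigma_definable_def by blast
  obtain \<phi>2 p2 where "sigma n \<phi>2" and Q: "\<And>E. Q E \<longleftrightarrow> sat M (env_join E p2) \<phi>2"
    using assms(3) unfolding sigma_definable_def by blast
  define \<psi>1 where "\<psi>1 = rename (param_shift 0) (bound_shift 0) {} \<phi>1"
  define \<psi>2 where "\<psi>2 = rename (param_shift 1) (bound_shift 1) {} \<phi>2"
  define p where "p m = (if m mod 8 = 1 then p1 else p2) (m div 8)" for m
  have "p (param_shift 0 k) = p1 k" "p (param_shift 1 k) = p2 k" if "odd k" for k
  proof -
    define m0 m1 where "m0 = param_shift 0 k" and "m1 = param_shift 1 k"
    have "m0 mod 8 = 1" "m0 div 8 = k" "m1 mod 8 = 3" "m1 div 8 = k"
      using that unfolding m0_def m1_def param_shift_def by presburger+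
    then show "p (param_shift 0 k) = p1 k" "p (param_shift 1 k) = p2 k"
      unfolding p_def m0_def[symmetric] m1_def[symmetric] by simp_all
  qed
  then have "env_join E (p \<circ> param_shift 0) = env_join E p1"
    and "env_join E (p \<circ> param_shift 1) = env_join E p2" for E
    by (auto simp: fun_eq_iff env_join_def)
  then have sat_\<psi>: "sat M (env_join E p) \<psi>1 \<longleftrightarrow> P E" "sat M (env_join E p) \<psi>2 \<longleftrightarrow> Q E" for E
    unfolding \<psi>1_def \<psi>2_def P Q by (simp_all add: sat_rename_shift)
  have "sigma n \<psi>1" "sigma n \<psi>2"
    unfolding \<psi>1_def \<psi>2_def using \<open>sigma n \<phi>1\<close> \<open>sigma n \<phi>2\<close> by (simp_all add: sigma_rename_shift)
  moreover have "apart \<psi>1 \<psi>2"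
    unfolding \<psi>1_def \<psi>2_def by (rule apart_rename_shift)
  ultimately obtain \<chi> where "sigma n \<chi>" "\<forall>e. sat M e \<chi> \<longleftrightarrow> op (sat M e \<psi>1) (sat M e \<psi>2)"
    using connective_closed_sigma_pi[OF assms(1)] unfolding connective_closed_def by blast
  then show ?thesis
    using sat_\<psi> by (intro sigma_definableI[where p = p]) auto
qed

lemma sigma_definable_conj:
  "sigma_definable n M P \<Longrightarrow> sigma_definable n M Q \<Longrightarrow> sigma_definable n M (\<lambda>E. P E \<and> Q E)"
  and sigma_definable_disj:
  "sigma_definable n M P \<Longrightarrow> sigma_definable n M Q \<Longrightarrow> sigma_definable n M (\<lambda>E. P E \<or> Q E)"
  by (rule sigma_definable_connective[where op = "(\<and>)"]; simp)
     (rule sigma_definable_connective[where op = "(\<or>)"]; simp)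

lemma sigma_definable_slots:
  assumes "sigma_definable n M (\<lambda>E. R (E 0) (E 1))"
  shows "sigma_definable n M (\<lambda>E. R (E i) (E j))"
  using sigma_definable_reindex[OF assms, of "\<lambda>k. if k = 0 then i else j"] by (simp add: comp_def)

lemma env_join_upd: "(env_join E p)(2 * i := u) = env_join (E(i := u)) p"
  by (auto simp: fun_eq_iff env_join_def)

lemma sigma_definable_bex:
  assumes "sigma_definable n M P"
  shows "sigma_definable n M (\<lambda>E. \<exists>u. lss M u c \<and> P (E(i := u)))"
proof (cases n)
  case 0
  obtain \<phi> p where "sigma 0 \<phi>" and P: "\<And>E. P E \<longleftrightarrow> sat M (env_join E p) \<phi>"
    using assms unfolding sigma_definable_def 0 by auto
  \<comment> \<open>the bound \<open>c\<close> becomes a parameter in a fresh odd variable \<open>v\<close>\<close>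
  obtain B where B: "\<forall>x \<in> vars \<phi>. x \<le> B"
    using finite_vars[of \<phi>] unfolding finite_nat_set_iff_bounded_le by blast
  define v where "v = 2 * B + 1"
  have "odd v"
    unfolding v_def by simp
  have "v \<notin> vars \<phi>"
  proof
    assume "v \<in> vars \<phi>"
    with B have "v \<le> B" by blast
    then show False unfolding v_def by simp
  qed
  define \<psi> where "\<psi> = Ex (2 * i) (Conj (Lt (Var (2 * i)) (Var v)) \<phi>)"
  have "delta0 \<psi>"
    unfolding \<psi>_def using \<open>odd v\<close> sigma_0_delta0[OF \<open>sigma 0 \<phi>\<close>] by (intro delta0.intros) auto
  moreover have "P E \<longleftrightarrow> sat M (env_join E (p(v := c))) \<phi>" for E
    unfolding P using \<open>v \<notin> vars \<phi>\<close> by (intro sat_cong) (auto simp: env_join_def)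
  then have "sat M (env_join E (p(v := c))) \<psi> \<longleftrightarrow> (\<exists>u. lss M u c \<and> P (E(i := u)))" for E
    unfolding \<psi>_def using \<open>odd v\<close> by (simp add: env_join_upd) (simp add: env_join_def)
  ultimately show ?thesis
    by (intro sigma_definable_delta0[where \<phi> = \<psi> and p = "p(v := c)"]) simp_all
next
  case (Suc m)
  have "sigma_definable n M (\<lambda>E. lss M (E i) c)"
    by (rule sigma_definable_delta0[where \<phi> = "Lt (Var (2 * i)) (Var 1)" and p = "\<lambda>_. c"])
      (auto intro: delta0.intros simp: env_join_def)
  from this assms have "sigma_definable n M (\<lambda>E. lss M (E i) c \<and> P E)"
    by (rule sigma_definable_conj)
  then obtain \<chi> p where "sigma n \<chi>" and \<chi>: "\<forall>E. lss M (E i) c \<and> P E \<longleftrightarrow> sat M (env_join E p) \<chi>"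
    unfolding sigma_definable_def by (elim exE conjE)
  have "sigma n (Ex (2 * i) \<chi>)"
    using Suc \<open>sigma n \<chi>\<close> by (auto intro: sigma_pi.intros(5))
  moreover have "sat M (env_join E p) (Ex (2 * i) \<chi>) \<longleftrightarrow> (\<exists>u. lss M u c \<and> P (E(i := u)))" for E
    using \<chi>[rule_format, symmetric] by (simp add: env_join_upd)
  ultimately show ?thesis
    by (intro sigma_definableI[where \<phi> = "Ex (2 * i) \<chi>" and p = p]) simp_all
qed

section \<open>\<open>\<Sigma>\<^sub>n-Card\<close> through definable injections\<close>

definition injection_graph :: "'a struc \<Rightarrow> ('a \<Rightarrow> 'a \<Rightarrow> bool) \<Rightarrow> 'a \<Rightarrow> 'a \<Rightarrow> bool" where
  "injection_graph M R b a \<longleftrightarrow>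
     (\<forall>u w. R u w \<longrightarrow> lss M u b \<and> lss M w a) \<and>
     (\<forall>u. lss M u b \<longrightarrow> (\<exists>!w. R u w)) \<and>
     (\<forall>u u' w. R u w \<longrightarrow> R u' w \<longrightarrow> u = u')"

lemma injection_graphI:
  assumes "\<And>u w. R u w \<Longrightarrow> lss M u b \<and> lss M w a"
    and "\<And>u. lss M u b \<Longrightarrow> \<exists>w. R u w"
    and "\<And>u w w'. R u w \<Longrightarrow> R u w' \<Longrightarrow> w = w'"
    and "\<And>u u' w. R u w \<Longrightarrow> R u' w \<Longrightarrow> u = u'"
  shows "injection_graph M R b a"
  using assms unfolding injection_graph_def by metis

lemma injection_graphD:
  assumes "injection_graph M R b a"
  shows "R u w \<Longrightarrow> lss M u b" and "R u w \<Longrightarrow> lss M w a"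
    and "lss M u b \<Longrightarrow> \<exists>w. R u w"
    and "R u w \<Longrightarrow> R u w' \<Longrightarrow> w = w'"
    and "R u w \<Longrightarrow> R u' w \<Longrightarrow> u = u'"
  using assms unfolding injection_graph_def by metis+

lemma mem_SigmaCard:
  "b \<in> SigmaCard n M a \<longleftrightarrow>
     (\<exists>\<phi> x y e. sigma n \<phi> \<and> x \<noteq> y \<and> injection_graph M (\<lambda>u w. sat M (e(x := u, y := w)) \<phi>) b a)"
  unfolding SigmaCard_def injection_graph_def Let_def by simp

lemma SigmaCard_iff:
  "b \<in> SigmaCard n M a \<longleftrightarrow> (\<exists>R. sigma_definable n M (\<lambda>E. R (E 0) (E 1)) \<and> injection_graph M R b a)"
proof
  assume "b \<in> SigmaCard n M a"
  then obtain \<phi> x y e where "sigma n \<phi>" "x \<noteq> y"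
    and inj: "injection_graph M (\<lambda>u w. sat M (e(x := u, y := w)) \<phi>) b a"
    unfolding mem_SigmaCard by auto
  have slots: "(\<lambda>k. if k \<in> {x, y} then E (if k = x then 0 else 1) else e k)
      = e(x := E 0, y := E 1)" for E
    using \<open>x \<noteq> y\<close> by (auto simp: fun_eq_iff)
  have "sigma_definable n M (\<lambda>E. sat M (e(x := E 0, y := E 1)) \<phi>)"
    using sigma_definable_sat[OF \<open>sigma n \<phi>\<close>, of M "{x, y}" "\<lambda>k. if k = x then 0 else 1" e]
    unfolding slots .
  with inj show "\<exists>R. sigma_definable n M (\<lambda>E. R (E 0) (E 1)) \<and> injection_graph M R b a"
    by (intro exI[of _ "\<lambda>u w. sat M (e(x := u, y := w)) \<phi>"]) simp
next
  assume "\<exists>R. sigma_definable n M (\<lambda>E. R (E 0) (E 1)) \<and> injection_graph M R b a"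
  then obtain R where "sigma_definable n M (\<lambda>E. R (E 0) (E 1))" and inj: "injection_graph M R b a"
    by (elim exE conjE)
  then obtain \<phi> p where "sigma n \<phi>" and R: "\<forall>E. R (E 0) (E 1) \<longleftrightarrow> sat M (env_join E p) \<phi>"
    unfolding sigma_definable_def by (elim exE conjE)
  define e where "e = env_join (\<lambda>_. undefined) p"
  have "e(0 := u, 2 := w) = env_join ((\<lambda>_. undefined)(0 := u, 1 := w)) p" for u w
    using env_join_upd[of "\<lambda>_. undefined" p 0 u] env_join_upd[of "(\<lambda>_. undefined)(0 := u)" p 1 w]
    unfolding e_def by simp
  then have "R u w \<longleftrightarrow> sat M (e(0 := u, 2 := w)) \<phi>" for u w
    using R[rule_format, of "(\<lambda>_. undefined)(0 := u, 1 := w)"] by simp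
  then have "R = (\<lambda>u w. sat M (e(0 := u, 2 := w)) \<phi>)"
    by (intro ext) simp
  with inj \<open>sigma n \<phi>\<close> show "b \<in> SigmaCard n M a"
    unfolding mem_SigmaCard by (intro exI[of _ \<phi>] exI[of _ "0::nat"] exI[of _ "2::nat"] exI[of _ e]) simp
qed

lemma SigmaCard_refl: "a \<in> SigmaCard n M a"
  unfolding SigmaCard_iff
proof (intro exI conjI)
  show "sigma_definable n M (\<lambda>E. lss M (E 0) a \<and> E 1 = E 0)"
    by (rule sigma_definable_delta0[where \<phi> = "Conj (Lt (Var 0) (Var 1)) (Eq (Var 2) (Var 0))"
          and p = "\<lambda>_. a"]) (auto intro: delta0.intros simp: env_join_def)
  show "injection_graph M (\<lambda>u w. lss M u a \<and> w = u) a a"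
    by (rule injection_graphI) auto
qed

lemma SigmaCard_trans:
  assumes "c \<in> SigmaCard n M b" and "b \<in> SigmaCard n M a"
  shows "c \<in> SigmaCard n M a"
proof -
  obtain R1 R2 where R1: "sigma_definable n M (\<lambda>E. R1 (E 0) (E 1))" "injection_graph M R1 c b"
    and R2: "sigma_definable n M (\<lambda>E. R2 (E 0) (E 1))" "injection_graph M R2 b a"
    using assms unfolding SigmaCard_iff by blast
  define R where "R u v \<longleftrightarrow> (\<exists>w. lss M w b \<and> R1 u w \<and> R2 w v)" for u v
  have "sigma_definable n M (\<lambda>E. R1 (E 0) (E 2) \<and> R2 (E 2) (E 1))"
    using sigma_definable_slots[OF R1(1), of 0 2] sigma_definable_slots[OF R2(1), of 2 1]
    by (rule sigma_definable_conj)
  from sigma_definable_bex[OF this, of b 2]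
  have "sigma_definable n M (\<lambda>E. R (E 0) (E 1))"
    unfolding R_def by simp
  moreover have "injection_graph M R c a"
  proof (rule injection_graphI)
    fix u v
    assume "R u v"
    then show "lss M u c \<and> lss M v a"
      unfolding R_def using injection_graphD(1)[OF R1(2)] injection_graphD(2)[OF R2(2)] by blast
  next
    fix u
    assume "lss M u c"
    then obtain w where "R1 u w"
      using injection_graphD(3)[OF R1(2)] by blast
    moreover from this have "lss M w b"
      by (rule injection_graphD(2)[OF R1(2)])
    moreover from this obtain v where "R2 w v"
      using injection_graphD(3)[OF R2(2)] by blast
    ultimately show "\<exists>v. R u v"
      unfolding R_def by blast
  next
    fix u v v'
    assume "R u v" "R u v'"
    then show "v = v'"
      unfolding R_def using injection_graphD(4)[OF R1(2)] injection_graphD(4)[OF R2(2)] by metis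
  next
    fix u u' v
    assume "R u v" "R u' v"
    then show "u = u'"
      unfolding R_def using injection_graphD(5)[OF R1(2)] injection_graphD(5)[OF R2(2)] by metis
  qed
  ultimately show ?thesis
    unfolding SigmaCard_iff by blast
qed

lemma SigmaCard_closed_iff:
  assumes "\<And>a b. b \<in> SigmaCard n M a \<Longrightarrow> F b \<in> SigmaCard n M (F a)"
  shows "F a \<in> SigmaCard n M a \<longleftrightarrow> (\<forall>x \<in> SigmaCard n M a. F x \<in> SigmaCard n M a)"
proof
  assume Fa: "F a \<in> SigmaCard n M a"
  show "\<forall>x \<in> SigmaCard n M a. F x \<in> SigmaCard n M a"
  proof
    fix x
    assume "x \<in> SigmaCard n M a"
    then have "F x \<in> SigmaCard n M (F a)"
      by (rule assms)
    then show "F x \<in> SigmaCard n M a"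
      using Fa by (rule SigmaCard_trans)
  qed
next
  assume "\<forall>x \<in> SigmaCard n M a. F x \<in> SigmaCard n M a"
  then show "F a \<in> SigmaCard n M a"
    using SigmaCard_refl[of a n M] by (rule bspec)
qed

section \<open>Arithmetic in models of \<open>I\<Delta>\<^sub>0\<close>\<close>

locale IDelta0 =
  fixes M :: "'a struc"
  assumes model: "IDelta0_model M"
begin

abbreviation Zr where "Zr \<equiv> zer M"
abbreviation Sc where "Sc \<equiv> suc M"
abbreviation add (infixl "\<oplus>" 65) where "x \<oplus> y \<equiv> pls M x y"
abbreviation mul (infixl "\<otimes>" 70) where "x \<otimes> y \<equiv> tms M x y"
abbreviation less (infix "\<prec>" 50) where "x \<prec> y \<equiv> lss M x y"

lemma suc_neq_zero: "Sc x \<noteq> Zr"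
  and suc_inject: "Sc x = Sc y \<Longrightarrow> x = y"
  and add_zero: "x \<oplus> Zr = x"
  and add_suc: "x \<oplus> Sc y = Sc (x \<oplus> y)"
  and mul_zero: "x \<otimes> Zr = Zr"
  and mul_suc: "x \<otimes> Sc y = x \<otimes> y \<oplus> x"
  and less_iff: "x \<prec> y \<longleftrightarrow> (\<exists>z. x \<oplus> Sc z = y)"
  using model unfolding IDelta0_model_def by blast+

lemma delta0_induct:
  assumes "delta0 \<phi>" and "\<And>u. P u \<longleftrightarrow> sat M (e(v := u)) \<phi>"
    and "P Zr" and "\<And>u. P u \<Longrightarrow> P (Sc u)"
  shows "P u"
proof -
  have "sat M (e(v := u)) \<phi>" for u
    using model assms unfolding IDelta0_model_def by metis
  then show ?thesis
    using assms(2) by blast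
qed

lemma less_suc_self: "x \<prec> Sc x"
  unfolding less_iff by (rule exI[of _ Zr]) (simp add: add_suc add_zero)

lemma zero_or_suc: "x = Zr \<or> (\<exists>y. x = Sc y)"
proof -
  \<comment> \<open>the predecessor is bounded by \<open>Sc x\<close> to keep the induction formula \<open>\<Delta>\<^sub>0\<close>\<close>
  have "x = Zr \<or> (\<exists>y. y \<prec> Sc x \<and> x = Sc y)"
  proof (rule delta0_induct[where e = "\<lambda>_. Zr" and v = 0])
    show "delta0 (Disj (Eq (Var 0) Zero)
      (Ex 1 (Conj (Lt (Var 1) (Succ (Var 0))) (Eq (Var 0) (Succ (Var 1))))))"
      by (intro delta0_Disj delta0.intros) auto
  next
    fix u
    have "u \<prec> Sc (Sc u)"
      unfolding less_iff by (rule exI[of _ "Sc Zr"]) (simp add: add_suc add_zero)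
    then show "Sc u = Zr \<or> (\<exists>y. y \<prec> Sc (Sc u) \<and> Sc u = Sc y)"
      by blast
  qed auto
  then show ?thesis
    by blast
qed

lemma zero_add: "Zr \<oplus> x = x"
  by (rule delta0_induct[where \<phi> = "Eq (Plus Zero (Var 0)) (Var 0)" and e = "\<lambda>_. Zr" and v = 0])
    (auto intro: delta0.intros simp: add_zero add_suc)

lemma suc_add: "Sc x \<oplus> y = Sc (x \<oplus> y)"
  by (rule delta0_induct[where \<phi> = "Eq (Plus (Succ (Var 1)) (Var 0)) (Succ (Plus (Var 1) (Var 0)))"
        and e = "(\<lambda>_. Zr)(1 := x)" and v = 0])
    (auto intro: delta0.intros simp: add_zero add_suc)

lemma add_commute: "x \<oplus> y = y \<oplus> x"
  by (rule delta0_induct[where \<phi> = "Eq (Plus (Var 1) (Var 0)) (Plus (Var 0) (Var 1))"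
        and e = "(\<lambda>_. Zr)(1 := x)" and v = 0])
    (auto intro: delta0.intros simp: add_zero add_suc suc_add zero_add)

lemma add_assoc: "x \<oplus> y \<oplus> z = x \<oplus> (y \<oplus> z)"
  by (rule delta0_induct[where
        \<phi> = "Eq (Plus (Plus (Var 1) (Var 2)) (Var 0)) (Plus (Var 1) (Plus (Var 2) (Var 0)))"
        and e = "(\<lambda>_. Zr)(1 := x, 2 := y)" and v = 0])
    (auto intro: delta0.intros simp: add_zero add_suc)

lemma add_left_commute: "x \<oplus> (y \<oplus> z) = y \<oplus> (x \<oplus> z)"
  by (metis add_assoc add_commute)

lemmas add_ac = add_assoc add_commute add_left_commute

lemma add_left_cancel: "z \<oplus> x = z \<oplus> y \<Longrightarrow> x = y"
proof -
  have "x \<oplus> z = y \<oplus> z \<longrightarrow> x = y"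
    by (rule delta0_induct[where
          \<phi> = "Disj (Neg (Eq (Plus (Var 1) (Var 0)) (Plus (Var 2) (Var 0)))) (Eq (Var 1) (Var 2))"
          and e = "(\<lambda>_. Zr)(1 := x, 2 := y)" and v = 0])
      (auto intro!: delta0_Disj delta0.intros simp: add_zero add_suc dest: suc_inject)
  then show "z \<oplus> x = z \<oplus> y \<Longrightarrow> x = y"
    by (simp add: add_commute)
qed

lemma add_eq_self_iff: "x \<oplus> y = x \<longleftrightarrow> y = Zr"
  using add_left_cancel[of x y Zr] by (auto simp: add_zero)

lemma not_less_zero: "\<not> x \<prec> Zr"
  unfolding less_iff by (simp add: add_suc suc_neq_zero)

lemma not_add_less_self: "\<not> x \<oplus> t \<prec> x"
proof
  assume "x \<oplus> t \<prec> x"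
  then obtain z where "x \<oplus> t \<oplus> Sc z = x"
    unfolding less_iff by blast
  then have "x \<oplus> Sc (t \<oplus> z) = x"
    by (simp add: add_assoc add_suc)
  then show False
    by (simp add: add_eq_self_iff suc_neq_zero)
qed

lemma less_irrefl: "\<not> x \<prec> x"
  using not_add_less_self[of x Zr] by (simp add: add_zero)

lemma less_trans: "x \<prec> y \<Longrightarrow> y \<prec> z \<Longrightarrow> x \<prec> z"
  unfolding less_iff by (metis add_assoc add_suc suc_add)

lemma less_suc_iff: "x \<prec> Sc y \<longleftrightarrow> x \<prec> y \<or> x = y"
proof
  assume "x \<prec> Sc y"
  then obtain z where "x \<oplus> z = y"
    unfolding less_iff by (auto simp: add_suc dest: suc_inject)
  then show "x \<prec> y \<or> x = y"
    using zero_or_suc[of z] unfolding less_iff by (auto simp: add_zero)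
next
  assume "x \<prec> y \<or> x = y"
  then show "x \<prec> Sc y"
  proof
    assume "x \<prec> y"
    then obtain z where "x \<oplus> Sc z = y"
      unfolding less_iff by blast
    then have "x \<oplus> Sc (Sc z) = Sc y"
      by (simp add: add_suc)
    then show ?thesis
      unfolding less_iff by blast
  qed (simp add: less_suc_self)
qed

lemma less_imp_suc_le: "x \<prec> y \<Longrightarrow> Sc x \<prec> y \<or> Sc x = y"
  unfolding less_iff by (metis add_suc add_zero suc_add zero_or_suc)

lemma zero_less: "x \<noteq> Zr \<Longrightarrow> Zr \<prec> x"
  using zero_or_suc[of x] unfolding less_iff by (auto simp: zero_add)

lemma less_linear: "x \<prec> y \<or> x = y \<or> y \<prec> x"
proof (rule delta0_induct[where P = "\<lambda>u. x \<prec> u \<or> x = u \<or> u \<prec> x" and e = "(\<lambda>_. Zr)(1 := x)" and v = 0])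
  show "delta0 (Disj (Lt (Var 1) (Var 0)) (Disj (Eq (Var 1) (Var 0)) (Lt (Var 0) (Var 1))))"
    by (intro delta0_Disj delta0.intros)
  show "x \<prec> Zr \<or> x = Zr \<or> Zr \<prec> x"
    using zero_less by blast
next
  fix u
  assume "x \<prec> u \<or> x = u \<or> u \<prec> x"
  then show "x \<prec> Sc u \<or> x = Sc u \<or> Sc u \<prec> x"
    using less_suc_iff less_imp_suc_le by blast
qed simp

lemma add_less_mono_left: "x \<prec> y \<Longrightarrow> z \<oplus> x \<prec> z \<oplus> y"
  unfolding less_iff by (metis add_assoc)

lemma less_add_cancel_left: "z \<oplus> x \<prec> z \<oplus> y \<Longrightarrow> x \<prec> y"
  using less_linear[of x y] add_less_mono_left less_irrefl less_trans by metis

lemma less_add_right: "x \<prec> y \<Longrightarrow> x \<prec> y \<oplus> z"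
  unfolding less_iff by (metis add_ac add_suc)

lemma less_add_cases:
  assumes "u \<prec> b \<oplus> d"
  shows "u \<prec> b \<or> (\<exists>u'. u' \<prec> d \<and> u = b \<oplus> u')"
proof -
  consider "u \<prec> b" | "u = b" | "b \<prec> u"
    using less_linear by blast
  then show ?thesis
  proof cases
    case 2
    then have "d \<noteq> Zr"
      using assms less_irrefl by (auto simp: add_zero)
    with 2 show ?thesis
      using zero_less add_zero by metis
  next
    case 3
    then obtain z where z: "b \<oplus> Sc z = u"
      unfolding less_iff by blast
    with assms have "Sc z \<prec> d"
      using less_add_cancel_left by blast
    with z show ?thesis
      by blast
  qed simp
qed

lemma zero_mul: "Zr \<otimes> x = Zr"
  by (rule delta0_induct[where \<phi> = "Eq (Times Zero (Var 0)) Zero" and e = "\<lambda>_. Zr" and v = 0])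
    (auto intro: delta0.intros simp: mul_zero mul_suc add_zero)

lemma mul_add_distrib: "x \<otimes> (y \<oplus> z) = x \<otimes> y \<oplus> x \<otimes> z"
  by (rule delta0_induct[where
        \<phi> = "Eq (Times (Var 1) (Plus (Var 2) (Var 0)))
                (Plus (Times (Var 1) (Var 2)) (Times (Var 1) (Var 0)))"
        and e = "(\<lambda>_. Zr)(1 := x, 2 := y)" and v = 0])
    (auto intro: delta0.intros simp: add_zero add_suc mul_zero mul_suc add_assoc)

lemma mul_add_less:
  assumes "q \<prec> d" and "r \<prec> b"
  shows "b \<otimes> q \<oplus> r \<prec> b \<otimes> d"
proof -
  obtain z where "q \<oplus> Sc z = d"
    using assms(1) unfolding less_iff by blast
  then have "b \<otimes> d = b \<otimes> q \<oplus> b \<oplus> b \<otimes> z"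
    by (metis mul_add_distrib mul_suc add_suc suc_add)
  moreover have "b \<otimes> q \<oplus> r \<prec> b \<otimes> q \<oplus> b"
    using assms(2) by (rule add_less_mono_left)
  ultimately show ?thesis
    by (simp add: less_add_right)
qed

lemma mul_add_less_ne:
  assumes "q \<prec> q'" and "r \<prec> b"
  shows "b \<otimes> q \<oplus> r \<noteq> b \<otimes> q' \<oplus> r'"
proof
  assume eq: "b \<otimes> q \<oplus> r = b \<otimes> q' \<oplus> r'"
  obtain z where "q \<oplus> Sc z = q'"
    using assms(1) unfolding less_iff by blast
  then have "b \<otimes> q' \<oplus> r' = b \<otimes> q \<oplus> (b \<oplus> (b \<otimes> z \<oplus> r'))"
    by (metis mul_add_distrib mul_suc add_suc suc_add add_ac)
  with eq have "r = b \<oplus> (b \<otimes> z \<oplus> r')"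
    using add_left_cancel by metis
  with assms(2) show False
    using not_add_less_self by metis
qed

lemma mul_add_inject:
  assumes "r \<prec> b" and "r' \<prec> b" and "b \<otimes> q \<oplus> r = b \<otimes> q' \<oplus> r'"
  shows "q = q'" and "r = r'"
proof -
  show "q = q'"
    using less_linear[of q q'] mul_add_less_ne assms by metis
  with assms(3) show "r = r'"
    using add_left_cancel by blast
qed

lemma division:
  assumes "u \<prec> b \<otimes> d"
  shows "\<exists>q r. q \<prec> d \<and> r \<prec> b \<and> u = b \<otimes> q \<oplus> r"
proof -
  have "u \<prec> b \<otimes> d \<longrightarrow> (\<exists>q. q \<prec> d \<and> (\<exists>r. r \<prec> b \<and> u = b \<otimes> q \<oplus> r))"
  proof (rule delta0_induct[where P = "\<lambda>u. u \<prec> b \<otimes> d \<longrightarrow> (\<exists>q. q \<prec> d \<and> (\<exists>r. r \<prec> b \<and> u = b \<otimes> q \<oplus> r))"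
        and e = "(\<lambda>_. Zr)(1 := b, 2 := d)" and v = 0])
    show "delta0 (Disj (Neg (Lt (Var 0) (Times (Var 1) (Var 2))))
      (Ex 3 (Conj (Lt (Var 3) (Var 2)) (Ex 4 (Conj (Lt (Var 4) (Var 1))
        (Eq (Var 0) (Plus (Times (Var 1) (Var 3)) (Var 4))))))))"
      by (intro delta0_Disj delta0.intros) auto
  next
    show "Zr \<prec> b \<otimes> d \<longrightarrow> (\<exists>q. q \<prec> d \<and> (\<exists>r. r \<prec> b \<and> Zr = b \<otimes> q \<oplus> r))"
    proof
      assume "Zr \<prec> b \<otimes> d"
      then have "b \<noteq> Zr" "d \<noteq> Zr"
        using less_irrefl by (auto simp: zero_mul mul_zero)
      then show "\<exists>q. q \<prec> d \<and> (\<exists>r. r \<prec> b \<and> Zr = b \<otimes> q \<oplus> r)"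
        using zero_less by (metis add_zero mul_zero)
    qed
  next
    fix u
    assume IH: "u \<prec> b \<otimes> d \<longrightarrow> (\<exists>q. q \<prec> d \<and> (\<exists>r. r \<prec> b \<and> u = b \<otimes> q \<oplus> r))"
    show "Sc u \<prec> b \<otimes> d \<longrightarrow> (\<exists>q. q \<prec> d \<and> (\<exists>r. r \<prec> b \<and> Sc u = b \<otimes> q \<oplus> r))"
    proof
      assume su: "Sc u \<prec> b \<otimes> d"
      then have "u \<prec> b \<otimes> d"
        using less_suc_self less_trans by blast
      then obtain q r where qr: "q \<prec> d" "r \<prec> b" "u = b \<otimes> q \<oplus> r"
        using IH by blast
      then have su_eq: "Sc u = b \<otimes> q \<oplus> Sc r"
        by (simp add: add_suc)
      consider "Sc r \<prec> b" | "Sc r = b"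
        using less_imp_suc_le[OF qr(2)] by blast
      then show "\<exists>q. q \<prec> d \<and> (\<exists>r. r \<prec> b \<and> Sc u = b \<otimes> q \<oplus> r)"
      proof cases
        case 1
        with qr(1) su_eq show ?thesis
          by blast
      next
        case 2
        then have su_mul: "Sc u = b \<otimes> Sc q \<oplus> Zr"
          using su_eq by (simp add: mul_suc add_zero)
        have "Sc q \<noteq> d"
          using su su_mul less_irrefl by (auto simp: add_zero)
        then have "Sc q \<prec> d"
          using less_imp_suc_le[OF qr(1)] by blast
        moreover have "Zr \<prec> b"
          using qr(2) zero_less not_less_zero by metis
        ultimately show ?thesis
          using su_mul by blast
      qed
    qed
  qed simp
  with assms show ?thesis
    by blast
qed

lemma SigmaCard_add:
  assumes "b \<in> SigmaCard n M a" and "d \<in> SigmaCard n M c"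
  shows "b \<oplus> d \<in> SigmaCard n M (a \<oplus> c)"
proof -
  obtain R1 R2 where R1: "sigma_definable n M (\<lambda>E. R1 (E 0) (E 1))" "injection_graph M R1 b a"
    and R2: "sigma_definable n M (\<lambda>E. R2 (E 0) (E 1))" "injection_graph M R2 d c"
    using assms unfolding SigmaCard_iff by blast
  define R where "R u w \<longleftrightarrow> R1 u w \<or> (\<exists>u'. u' \<prec> d \<and> (\<exists>w'. w' \<prec> c \<and> R2 u' w' \<and> u = b \<oplus> u' \<and> w = a \<oplus> w'))"
    for u w
  have "sigma_definable n M (\<lambda>E. E 0 = b \<oplus> E 2 \<and> E 1 = a \<oplus> E 3)"
    by (rule sigma_definable_delta0[where p = "\<lambda>k. if k = 1 then b else a"
          and \<phi> = "Conj (Eq (Var 0) (Plus (Var 1) (Var 4))) (Eq (Var 2) (Plus (Var 3) (Var 6)))"])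
      (auto intro: delta0.intros simp: env_join_def)
  with sigma_definable_slots[OF R2(1), of 2 3]
  have "sigma_definable n M (\<lambda>E. R2 (E 2) (E 3) \<and> E 0 = b \<oplus> E 2 \<and> E 1 = a \<oplus> E 3)"
    by (rule sigma_definable_conj)
  from sigma_definable_bex[OF sigma_definable_bex[OF this, of c 3], of d 2]
  have "sigma_definable n M (\<lambda>E. \<exists>u'. u' \<prec> d \<and> (\<exists>w'. w' \<prec> c \<and> R2 u' w' \<and> E 0 = b \<oplus> u' \<and> E 1 = a \<oplus> w'))"
    by simp
  with R1(1) have "sigma_definable n M (\<lambda>E. R (E 0) (E 1))"
    unfolding R_def by (rule sigma_definable_disj)
  moreover have "injection_graph M R (b \<oplus> d) (a \<oplus> c)"
  proof (rule injection_graphI)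
    fix u w
    assume "R u w"
    then show "u \<prec> b \<oplus> d \<and> w \<prec> a \<oplus> c"
      unfolding R_def using injection_graphD(1,2)[OF R1(2)] less_add_right add_less_mono_left by blast
  next
    fix u
    assume "u \<prec> b \<oplus> d"
    then consider "u \<prec> b" | u' where "u' \<prec> d" "u = b \<oplus> u'"
      using less_add_cases by blast
    then show "\<exists>w. R u w"
    proof cases
      case 1
      then show ?thesis
        unfolding R_def using injection_graphD(3)[OF R1(2)] by blast
    next
      case 2
      then obtain w' where "R2 u' w'"
        using injection_graphD(3)[OF R2(2)] by blast
      with 2 show ?thesis
        unfolding R_def using injection_graphD(2)[OF R2(2)] by blast
    qed
  next
    fix u w w'
    assume "R u w" "R u w'"
    then show "w = w'"
      unfolding R_def
      using injection_graphD(1,4)[OF R1(2)] injection_graphD(4)[OF R2(2)]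
        not_add_less_self add_left_cancel
      by metis
  next
    fix u u' w
    assume "R u w" "R u' w"
    then show "u = u'"
      unfolding R_def
      using injection_graphD(2,5)[OF R1(2)] injection_graphD(5)[OF R2(2)]
        not_add_less_self add_left_cancel
      by metis
  qed
  ultimately show ?thesis
    unfolding SigmaCard_iff by blast
qed

lemma SigmaCard_mul:
  assumes "b \<in> SigmaCard n M a" and "d \<in> SigmaCard n M c"
  shows "b \<otimes> d \<in> SigmaCard n M (a \<otimes> c)"
proof -
  obtain R1 R2 where R1: "sigma_definable n M (\<lambda>E. R1 (E 0) (E 1))" "injection_graph M R1 b a"
    and R2: "sigma_definable n M (\<lambda>E. R2 (E 0) (E 1))" "injection_graph M R2 d c"
    using assms unfolding SigmaCard_iff by blast
  define R where "R u w \<longleftrightarrow> (\<exists>q. q \<prec> d \<and> (\<exists>r. r \<prec> b \<and> (\<exists>w1. w1 \<prec> c \<and> (\<exists>w2. w2 \<prec> a \<and>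
      R2 q w1 \<and> R1 r w2 \<and> u = b \<otimes> q \<oplus> r \<and> w = a \<otimes> w1 \<oplus> w2))))" for u w
  have arith: "sigma_definable n M (\<lambda>E. E 0 = b \<otimes> E 2 \<oplus> E 3 \<and> E 1 = a \<otimes> E 4 \<oplus> E 5)"
    by (rule sigma_definable_delta0[where p = "\<lambda>k. if k = 1 then b else a"
          and \<phi> = "Conj (Eq (Var 0) (Plus (Times (Var 1) (Var 4)) (Var 6)))
                        (Eq (Var 2) (Plus (Times (Var 3) (Var 8)) (Var 10)))"])
      (auto intro: delta0.intros simp: env_join_def)
  have "sigma_definable n M (\<lambda>E. R2 (E 2) (E 4) \<and> R1 (E 3) (E 5) \<and>
      E 0 = b \<otimes> E 2 \<oplus> E 3 \<and> E 1 = a \<otimes> E 4 \<oplus> E 5)"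
    using sigma_definable_slots[OF R2(1), of 2 4]
      sigma_definable_conj[OF sigma_definable_slots[OF R1(1), of 3 5] arith]
    by (rule sigma_definable_conj)
  from sigma_definable_bex[OF sigma_definable_bex[OF sigma_definable_bex[OF
      sigma_definable_bex[OF this, of a 5], of c 4], of b 3], of d 2]
  have "sigma_definable n M (\<lambda>E. R (E 0) (E 1))"
    unfolding R_def by simp
  moreover have "injection_graph M R (b \<otimes> d) (a \<otimes> c)"
  proof (rule injection_graphI)
    fix u w
    assume "R u w"
    then show "u \<prec> b \<otimes> d \<and> w \<prec> a \<otimes> c"
      unfolding R_def using mul_add_less by blast
  next
    fix u
    assume "u \<prec> b \<otimes> d"
    then obtain q r where qr: "q \<prec> d" "r \<prec> b" "u = b \<otimes> q \<oplus> r"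
      using division by blast
    moreover obtain w1 w2 where "R2 q w1" "R1 r w2"
      using qr injection_graphD(3)[OF R1(2)] injection_graphD(3)[OF R2(2)] by metis
    ultimately show "\<exists>w. R u w"
      unfolding R_def using injection_graphD(2)[OF R1(2)] injection_graphD(2)[OF R2(2)] by blast
  next
    fix u w w'
    assume "R u w" "R u w'"
    then show "w = w'"
      unfolding R_def using injection_graphD(4)[OF R1(2)] injection_graphD(4)[OF R2(2)] mul_add_inject
      by metis
  next
    fix u u' w
    assume "R u w" "R u' w"
    then show "u = u'"
      unfolding R_def using injection_graphD(5)[OF R1(2)] injection_graphD(5)[OF R2(2)] mul_add_inject
      by metis
  qed
  ultimately show ?thesis
    unfolding SigmaCard_iff by blast
qed

end

theorem proposition6p5:
  fixes n :: nat and M :: "'a struc" and a :: 'a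
  assumes "IDelta0_model M"
  shows "(suc M a \<in> SigmaCard n M a \<longleftrightarrow>
            (\<forall>x \<in> SigmaCard n M a. suc M x \<in> SigmaCard n M a))
       \<and> (pls M a a \<in> SigmaCard n M a \<longleftrightarrow>
            (\<forall>x \<in> SigmaCard n M a. pls M x x \<in> SigmaCard n M a))
       \<and> (tms M a a \<in> SigmaCard n M a \<longleftrightarrow>
            (\<forall>x \<in> SigmaCard n M a. tms M x x \<in> SigmaCard n M a))"
proof -
  interpret IDelta0 M
    by (rule IDelta0.intro) (rule assms)
  have "Sc b \<in> SigmaCard n M (Sc a)" if "b \<in> SigmaCard n M a" for a b
    using SigmaCard_add[OF that SigmaCard_refl[of "Sc Zr"]] by (simp add: add_suc add_zero)
  moreover have "b \<oplus> b \<in> SigmaCard n M (a \<oplus> a)" if "b \<in> SigmaCard n M a" for a b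
    using that that by (rule SigmaCard_add)
  moreover have "b \<otimes> b \<in> SigmaCard n M (a \<otimes> a)" if "b \<in> SigmaCard n M a" for a b
    using that that by (rule SigmaCard_mul)
  ultimately show ?thesis
    using SigmaCard_closed_iff[where F = "suc M"] SigmaCard_closed_iff[where F = "\<lambda>x. pls M x x"]
      SigmaCard_closed_iff[where F = "\<lambda>x. tms M x x"]
    by simp
qed

end
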